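(* Let $p$ be a prime and let $\mathrm{Circ}(a_0,\ldots,a_{p-1})$ be a Hermitian circulant with universal perfect state transfer. Then $a_j\neq 0$ for $j=1,\ldots,p-1$.
   Context: $\mathrm{Circ}(a_0,\ldots,a_{n-1})$ denotes the $n\times n$ matrix $C$ with $C_{j,k}=a_{k-j}$ (indices mod $n$). A graph with Hermitian adjacency matrix $A$ has universal perfect state transfer if for every pair of vertices $v,w$ there is $t>0$ with $|\langle w|e^{-\mathtt{i} At}|v\rangle|=1$. *)

theory Defs
  imports Complex_Main "HOL-Computational_Algebra.Primes" "Jordan_Normal_Form.Matrix"
begin

definition circ_mat :: "nat \<Rightarrow> (nat \<Rightarrow> complex) \<Rightarrow> complex mat" where
  "circ_mat n a = mat n n (\<lambda>(j,k). a ((k + n - j) mod n))"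

definition hermitian_mat :: "complex mat \<Rightarrow> bool" where
  "hermitian_mat A \<longleftrightarrow> dim_row A = dim_col A \<and>
     (\<forall>j < dim_row A. \<forall>k < dim_row A. A $$ (k, j) = cnj (A $$ (j, k)))"

definition mat_exp :: "complex mat \<Rightarrow> complex mat" where
  "mat_exp M = mat (dim_row M) (dim_col M)
     (\<lambda>(i,j). \<Sum>k. (M ^\<^sub>m k) $$ (i, j) / of_nat (fact k))"

definition universal_pst :: "complex mat \<Rightarrow> bool" where
  "universal_pst A \<longleftrightarrow> (\<forall>v < dim_row A. \<forall>w < dim_row A. v \<noteq> w \<longrightarrow>
     (\<exists>t::real. t > 0 \<and> cmod (mat_exp ((- \<i> * complex_of_real t) \<cdot>\<^sub>m A) $$ (w, v)) = 1))"

end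

theory Submission
  imports Defs "Berlekamp_Zassenhaus.Factor_Bound" "Jordan_Normal_Form.Char_Poly" "HOL-Library.Real_Mod"
begin

(* With w = e^(2 pi i/p), the Fourier vectors (w^(ik))_i diagonalise the circulant C, with eigenvalues
   lambda_k = sum_m a_m w^(mk), which are real since C is Hermitian. Hence the (1,0) entry of exp(-i t C)
   is the mean of the p unimodular numbers e^(-i t lambda_k) w^k; perfect state transfer from 0 to 1
   forces them all to be equal, i.e. t (lambda_k - lambda_0) = (2 pi/p) m_k with integers
   m_k = k (mod p). If a_j = 0, Fourier inversion gives sum_k lambda_k z^k = 0 for the primitive p-th
   root of unity z = w^(-j), hence sum_k m_k z^k = 0. As 1 + x + ... + x^(p-1) is irreducible over Q
   (Eisenstein after x -> x + 1), all m_k are then equal, contradicting m_1 - m_0 = 1 (mod p). *)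

section \<open>Irreducibility of 1 + x + ... + x^(p-1) over the rationals\<close>

lemma eisenstein_factor_degree_0:
  fixes f g :: "int poly" and P :: int
  assumes "prime P"
    and "\<not> P\<^sup>2 dvd coeff (f * g) 0"
    and "\<And>i. i < degree (f * g) \<Longrightarrow> P dvd coeff (f * g) i"
    and "\<not> P dvd lead_coeff (f * g)"
    and "P dvd coeff f 0"
  shows "degree g = 0"
proof (rule ccontr)
  assume "degree g \<noteq> 0"
  have "f \<noteq> 0" "g \<noteq> 0" using assms(4) by auto
  then have deg: "degree (f * g) = degree f + degree g" by (rule degree_mult_eq)
  have "\<not> P dvd lead_coeff f"
    using assms(4) unfolding lead_coeff_mult by (rule contrapos_nn) (rule dvd_mult2)
  then have ex: "\<exists>i. \<not> P dvd coeff f i" by blast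
  define r where "r = (LEAST i. \<not> P dvd coeff f i)"
  have r: "\<not> P dvd coeff f r" unfolding r_def using ex by (rule LeastI_ex)
  have below_r: "P dvd coeff f i" if "i < r" for i
    using not_less_Least[of i "\<lambda>i. \<not> P dvd coeff f i"] that unfolding r_def by blast
  have "r \<le> degree f" using r by (metis dvd_0_right le_degree)
  then have "r < degree (f * g)" using deg \<open>degree g \<noteq> 0\<close> by simp
  then have "P dvd coeff (f * g) r" by (rule assms(3))
  moreover have "coeff (f * g) r = (\<Sum>i<r. coeff f i * coeff g (r - i)) + coeff f r * coeff g 0"
    unfolding coeff_mult lessThan_Suc_atMost[symmetric] by simp
  moreover have "P dvd (\<Sum>i<r. coeff f i * coeff g (r - i))"
    by (rule dvd_sum) (simp add: below_r)
  ultimately have "P dvd coeff f r * coeff g 0" by (simp add: dvd_add_right_iff)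
  then have "P dvd coeff g 0" using assms(1) r by (simp add: prime_dvd_mult_iff)
  with assms(5) have "P\<^sup>2 dvd coeff f 0 * coeff g 0" by (simp add: power2_eq_square mult_dvd_mono)
  with assms(2) show False by (simp add: coeff_mult_0)
qed

lemma eisenstein_irreducible\<^sub>d:
  fixes h :: "int poly" and P :: int
  assumes P: "prime P"
    and "P dvd coeff h 0" "\<not> P\<^sup>2 dvd coeff h 0"
    and "\<And>i. i < degree h \<Longrightarrow> P dvd coeff h i"
    and "\<not> P dvd lead_coeff h"
  shows "irreducible\<^sub>d h"
proof (rule irreducible\<^sub>dI)
  show "0 < degree h" using assms(2,5) by (metis gr0I)
next
  fix f g assume "degree f > 0" "degree g > 0" and h: "h = f * g"
  have "P dvd coeff f 0 * coeff g 0" using assms(2) by (simp add: h coeff_mult_0)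
  then consider "P dvd coeff f 0" | "P dvd coeff g 0" using P prime_dvd_mult_iff by blast
  then show False
  proof cases
    case 1
    have "degree g = 0"
      by (rule eisenstein_factor_degree_0[OF P _ _ _ 1]) (use assms(3-5) in \<open>simp_all add: h\<close>)
    with \<open>degree g > 0\<close> show False by simp
  next
    case 2
    have "degree f = 0"
      by (rule eisenstein_factor_degree_0[OF P _ _ _ 2]) (use assms(3-5) in \<open>simp_all add: h mult.commute\<close>)
    with \<open>degree f > 0\<close> show False by simp
  qed
qed

definition ones_poly :: "nat \<Rightarrow> 'a::comm_ring_1 poly" where
  "ones_poly n = (\<Sum>k<n. monom 1 k)"

lemma coeff_ones_poly: "coeff (ones_poly n) i = (if i < n then 1 else 0)"
  by (simp add: ones_poly_def coeff_sum)

lemma degree_ones_poly: "n > 0 \<Longrightarrow> degree (ones_poly n :: 'a::comm_ring_1 poly) = n - 1"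
  by (intro antisym degree_le le_degree) (auto simp: coeff_ones_poly)

lemma ones_poly_pcompose_shift: "ones_poly n \<circ>\<^sub>p [:1, 1:] = (\<Sum>k<n. [:1, 1:] ^ k)"
  by (simp add: ones_poly_def pcompose_hom.hom_sum monom_altdef pcompose_hom.hom_power pcompose_pCons)

lemma coeff_one_plus_X_power: "coeff ([:1, 1:] ^ n :: 'a::comm_semiring_1 poly) i = of_nat (n choose i)"
proof (cases "i \<le> n")
  case True
  then show ?thesis using coeff_linear_poly_power[OF True, of "1::'a" 1] by simp
next
  case False
  have "degree ([:1, 1:] ^ n :: 'a poly) \<le> n"
    by (rule order.trans[OF degree_power_le]) simp
  with False show ?thesis by (simp add: coeff_eq_0 binomial_eq_0)
qed

lemma coeff_ones_poly_pcompose_shift: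
  "coeff (ones_poly n \<circ>\<^sub>p [:1, 1:] :: int poly) i = int (n choose (i + 1))"
proof -
  have "[:1, 1:] ^ n - 1 = ([:1, 1:] - 1) * (\<Sum>k<n. [:1, 1:] ^ k :: int poly)"
    by (rule power_diff_1_eq)
  also have "[:1, 1:] - 1 = [:0, 1 :: int:]"
    by (simp add: poly_eq_iff coeff_pCons split: nat.split)
  finally have "[:1, 1:] ^ n - 1 = pCons 0 (ones_poly n \<circ>\<^sub>p [:1, 1 :: int:])"
    unfolding ones_poly_pcompose_shift by simp
  then have "coeff (ones_poly n \<circ>\<^sub>p [:1, 1 :: int:]) i = coeff ([:1, 1:] ^ n - 1) (Suc i)"
    by simp
  then show ?thesis using coeff_one_plus_X_power[of n "Suc i"] by simp
qed

lemma irreducible\<^sub>d_ones_poly_int: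
  assumes p: "prime p"
  shows "irreducible\<^sub>d (ones_poly p :: int poly)"
proof
  define \<Psi> where "\<Psi> = ones_poly p \<circ>\<^sub>p [:1, 1 :: int:]"
  have p0: "p > 0" using p by (simp add: prime_gt_0_nat)
  then have deg: "degree (ones_poly p :: int poly) = p - 1" by (rule degree_ones_poly)
  then have deg_\<Psi>: "degree \<Psi> = p - 1" by (simp add: \<Psi>_def degree_pcompose)
  have "irreducible\<^sub>d \<Psi>"
  proof (rule eisenstein_irreducible\<^sub>d)
    show "prime (int p)" using p by simp
    show "int p dvd coeff \<Psi> 0" "\<not> (int p)\<^sup>2 dvd coeff \<Psi> 0"
      using prime_gt_1_nat[OF p] unfolding \<Psi>_def coeff_ones_poly_pcompose_shift
      by (simp_all add: power2_eq_square)
    show "int p dvd coeff \<Psi> i" if "i < degree \<Psi>" for i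
      using that deg_\<Psi> p dvd_choose_prime[of "i + 1" p]
      unfolding \<Psi>_def coeff_ones_poly_pcompose_shift by simp
    show "\<not> int p dvd lead_coeff \<Psi>"
      using deg_\<Psi> prime_gt_1_nat[OF p] unfolding \<Psi>_def coeff_ones_poly_pcompose_shift by simp
  qed
  then show "0 < degree (ones_poly p :: int poly)"
    using deg deg_\<Psi> by (simp add: irreducible\<^sub>d_def)
  fix q r :: "int poly"
  assume deg_q: "degree q < degree (ones_poly p :: int poly)"
    and deg_r: "degree r < degree (ones_poly p :: int poly)"
    and factor: "ones_poly p = q * r"
  have "degree (q \<circ>\<^sub>p [:1, 1:]) < degree \<Psi>" "degree (r \<circ>\<^sub>p [:1, 1:]) < degree \<Psi>"
    using deg_q deg_r deg deg_\<Psi> by (simp_all add: degree_pcompose)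
  moreover have "\<Psi> = (q \<circ>\<^sub>p [:1, 1:]) * (r \<circ>\<^sub>p [:1, 1:])"
    unfolding \<Psi>_def factor by (rule pcompose_mult)
  ultimately show False using irreducible\<^sub>dD(2)[OF \<open>irreducible\<^sub>d \<Psi>\<close>] by blast
qed

lemma irreducible\<^sub>d_ones_poly_rat:
  assumes "prime p"
  shows "irreducible\<^sub>d (ones_poly p :: rat poly)"
proof -
  have "map_poly rat_of_int (ones_poly p) = ones_poly p"
    by (simp add: ones_poly_def of_int_poly_hom.hom_sum)
  with irreducible\<^sub>d_int_rat[OF irreducible\<^sub>d_ones_poly_int[OF assms]] show ?thesis by simp
qed

lemma irreducible\<^sub>d_dvd_of_common_root:
  fixes P M :: "'a::field_gcd poly" and f :: "'a \<Rightarrow> 'b::field"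
  assumes "field_hom f" and irr: "irreducible\<^sub>d P"
    and "poly (map_poly f P) z = 0" "poly (map_poly f M) z = 0"
  shows "P dvd M"
proof -
  interpret f: field_hom f by fact
  interpret pf: map_poly_comm_ring_hom f by unfold_locales
  define g where "g = gcd P M"
  have "g = fst (bezout_coefficients P M) * P + snd (bezout_coefficients P M) * M"
    unfolding g_def by (rule bezout_coefficients_fst_snd[symmetric])
  then have root: "poly (map_poly f g) z = 0"
    using assms(3,4) by (simp add: pf.hom_add pf.hom_mult)
  have "g \<noteq> 0" using irr by (auto simp: g_def)
  have "degree g > 0"
  proof (rule ccontr)
    assume "\<not> degree g > 0"
    then obtain c where "g = [:c:]" by (metis degree_eq_zeroE gr0I)
    with root \<open>g \<noteq> 0\<close> show False by simp
  qed
  then obtain c where "c \<noteq> 0" "P = smult c g"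
    using irreducible\<^sub>d_dvd_smult[OF _ irr] unfolding g_def by blast
  then have "P dvd g" by (simp add: smult_dvd_iff)
  also have "g dvd M" unfolding g_def by simp
  finally show ?thesis .
qed

lemma int_relation_prime_root_of_unity_const:
  fixes z :: "'a::field_char_0" and m :: "nat \<Rightarrow> int"
  assumes p: "prime p" and "z ^ p = 1" "z \<noteq> 1"
    and relation: "(\<Sum>k<p. of_int (m k) * z ^ k) = 0" and "k < p"
  shows "m k = m 0"
proof -
  interpret of_rat_poly: map_poly_comm_ring_hom "of_rat :: rat \<Rightarrow> 'a" by unfold_locales
  have hom: "field_hom (of_rat :: rat \<Rightarrow> 'a)" by unfold_locales
  define M :: "rat poly" where "M = (\<Sum>k<p. monom (of_int (m k)) k)"
  have coeff_M: "coeff M i = (if i < p then of_int (m i) else 0)" for i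
    by (simp add: M_def coeff_sum)
  have "poly (map_poly of_rat (ones_poly p)) z = 0"
    using assms(2,3) by (simp add: ones_poly_def of_rat_poly.hom_sum poly_sum poly_monom sum_gp_strict)
  moreover have "poly (map_poly of_rat M) z = 0"
    using relation by (simp add: M_def of_rat_poly.hom_sum poly_sum poly_monom)
  ultimately have "ones_poly p dvd M"
    by (rule irreducible\<^sub>d_dvd_of_common_root[OF hom irreducible\<^sub>d_ones_poly_rat[OF p]])
  then obtain q where M: "M = ones_poly p * q" by (elim dvdE)
  have p0: "p > 0" using p by (simp add: prime_gt_0_nat)
  have "degree q = 0"
  proof (cases "q = 0")
    case False
    have "degree M \<le> p - 1" by (rule degree_le) (auto simp: coeff_M)
    moreover have "ones_poly p \<noteq> (0 :: rat poly)" using irreducible\<^sub>d_ones_poly_rat[OF p] by auto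
    ultimately show ?thesis using False p0 by (simp add: M degree_mult_eq degree_ones_poly)
  qed simp
  then have "M = ones_poly p * [:coeff q 0:]" unfolding M by (simp add: degree_0_id)
  then have "coeff M i = coeff q 0" if "i < p" for i using that by (simp add: coeff_ones_poly)
  from this[of k] this[of 0] have "rat_of_int (m k) = rat_of_int (m 0)"
    using \<open>k < p\<close> p0 by (simp add: coeff_M)
  then show ?thesis by simp
qed

section \<open>Roots of unity and the Fourier basis\<close>

definition unity_root :: "nat \<Rightarrow> complex" where
  "unity_root n = cis (2 * pi / n)"

lemma unity_root_power: "unity_root n ^ k = cis (2 * pi * k / n)"
  by (simp add: unity_root_def DeMoivre mult.commute)

lemma unity_root_power_eq_1_iff:
  assumes "n > 0"
  shows "unity_root n ^ k = 1 \<longleftrightarrow> n dvd k"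
proof -
  have "unity_root n ^ k = 1 \<longleftrightarrow> (\<exists>i::int. real k = of_int i * real n)"
    using assms by (simp add: unity_root_power cis_eq_1_iff field_simps)
  also have "\<dots> \<longleftrightarrow> int n dvd int k"
    by (metis dvd_def mult.commute of_int_eq_iff of_int_mult of_int_of_nat_eq)
  finally show ?thesis by simp
qed

lemma unity_root_power_self: "n > 0 \<Longrightarrow> unity_root n ^ n = 1"
  by (simp add: unity_root_power_eq_1_iff)

lemma sum_unity_root_powers:
  assumes "n > 0"
  shows "(\<Sum>k<n. (unity_root n ^ r) ^ k) = (if n dvd r then of_nat n else 0)"
proof -
  have "(unity_root n ^ r) ^ n = (unity_root n ^ n) ^ r"
    by (simp flip: power_mult add: mult.commute)
  then have "(unity_root n ^ r) ^ n = 1"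
    using assms by (simp add: unity_root_power_self)
  then show ?thesis using assms by (simp add: unity_root_power_eq_1_iff sum_gp_strict)
qed

lemma sum_unity_root_powers_less:
  assumes "i < n"
  shows "(\<Sum>k<n. unity_root n ^ (i * k)) = (if i = 0 then of_nat n else 0)"
  using sum_unity_root_powers[of n i] assms by (auto simp: power_mult dest: dvd_imp_le)

definition fourier_vec :: "nat \<Rightarrow> nat \<Rightarrow> complex vec" where
  "fourier_vec n k = vec n (\<lambda>i. unity_root n ^ (i * k))"

lemma fourier_vec_carrier [simp]: "fourier_vec n k \<in> carrier_vec n"
  by (simp add: fourier_vec_def)

lemma fourier_vec_nonzero: "n > 0 \<Longrightarrow> fourier_vec n k \<noteq> 0\<^sub>v n"
  by (metis fourier_vec_def index_vec index_zero_vec(1) mult_0 power_0 zero_neq_one)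

lemma smult_mat_mult_mat_vec:
  assumes "A \<in> carrier_mat n m" "v \<in> carrier_vec m"
  shows "(c \<cdot>\<^sub>m A) *\<^sub>v v = c \<cdot>\<^sub>v (A *\<^sub>v v)"
  using assms by (intro eq_vecI) (auto simp: scalar_prod_def sum_distrib_left ac_simps)

(* Column 0 of B is read off from the eigenvalues, since the unit vector e_0 is the mean of the
   Fourier vectors. *)
lemma fourier_column:
  assumes B: "B \<in> carrier_mat n n" and l: "l < n"
    and eigen: "\<And>k. k < n \<Longrightarrow> B *\<^sub>v fourier_vec n k = \<mu> k \<cdot>\<^sub>v fourier_vec n k"
  shows "of_nat n * B $$ (l, 0) = (\<Sum>k<n. \<mu> k * unity_root n ^ (l * k))"
proof -
  have "(B *\<^sub>v fourier_vec n k) $ l = \<mu> k * unity_root n ^ (l * k)" if "k < n" for k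
    using eigen[OF that] l by (simp add: fourier_vec_def)
  then have "(\<Sum>k<n. \<mu> k * unity_root n ^ (l * k)) = (\<Sum>k<n. (B *\<^sub>v fourier_vec n k) $ l)"
    by (intro sum.cong refl) simp
  also have "\<dots> = (\<Sum>k<n. \<Sum>i<n. B $$ (l, i) * unity_root n ^ (i * k))"
    using B l by (simp add: scalar_prod_def fourier_vec_def atLeast0LessThan)
  also have "\<dots> = (\<Sum>i<n. B $$ (l, i) * (\<Sum>k<n. unity_root n ^ (i * k)))"
    by (subst sum.swap) (simp add: sum_distrib_left)
  also have "\<dots> = (\<Sum>i<n. if i = 0 then of_nat n * B $$ (l, i) else 0)"
    by (intro sum.cong) (auto simp: sum_unity_root_powers_less)
  also have "\<dots> = of_nat n * B $$ (l, 0)"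
    using l by simp
  finally show ?thesis by (rule sym)
qed

lemma sums_exp_fact: "(\<lambda>m. x ^ m / of_nat (fact m)) sums exp (x :: complex)"
proof -
  have "(\<lambda>m. x ^ m /\<^sub>R fact m) = (\<lambda>m. x ^ m / of_nat (fact m))"
    by (simp add: scaleR_conv_of_real divide_inverse mult.commute)
  with exp_converges[of x] show ?thesis by simp
qed

lemma mat_exp_column:
  assumes B: "B \<in> carrier_mat n n" and l: "l < n"
    and eigen: "\<And>k. k < n \<Longrightarrow> B *\<^sub>v fourier_vec n k = \<mu> k \<cdot>\<^sub>v fourier_vec n k"
  shows "mat_exp B $$ (l, 0) = (\<Sum>k<n. exp (\<mu> k) * unity_root n ^ (l * k)) / of_nat n"
proof -
  have n: "n > 0" using l by simp
  have eigenvec: "eigenvector B (fourier_vec n k) (\<mu> k)" if "k < n" for k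
    using B eigen[OF that] fourier_vec_nonzero[OF n] by (simp add: eigenvector_def)
  have power_column: "of_nat n * (B ^\<^sub>m m) $$ (l, 0) = (\<Sum>k<n. \<mu> k ^ m * unity_root n ^ (l * k))" for m
    by (rule fourier_column[OF pow_carrier_mat[OF B] l, where \<mu> = "\<lambda>k. \<mu> k ^ m"])
      (rule eigenvector_pow[OF B eigenvec])
  have series_term: "(\<Sum>k<n. \<mu> k ^ m / of_nat (fact m) * unity_root n ^ (l * k)) / of_nat n
      = (B ^\<^sub>m m) $$ (l, 0) / of_nat (fact m)" for m
  proof -
    have "(\<Sum>k<n. \<mu> k ^ m / of_nat (fact m) * unity_root n ^ (l * k))
        = (\<Sum>k<n. \<mu> k ^ m * unity_root n ^ (l * k)) / of_nat (fact m)"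
      by (simp add: sum_divide_distrib)
    then show ?thesis using n by (simp add: power_column[symmetric])
  qed
  have "(\<lambda>m. \<Sum>k<n. \<mu> k ^ m / of_nat (fact m) * unity_root n ^ (l * k))
      sums (\<Sum>k<n. exp (\<mu> k) * unity_root n ^ (l * k))"
    by (intro sums_sum sums_mult2 sums_exp_fact)
  then have "(\<lambda>m. (B ^\<^sub>m m) $$ (l, 0) / of_nat (fact m))
      sums ((\<Sum>k<n. exp (\<mu> k) * unity_root n ^ (l * k)) / of_nat n)"
    unfolding series_term[symmetric] by (rule sums_divide)
  then show ?thesis
    using B l by (simp add: mat_exp_def sums_iff)
qed

section \<open>Hermitian eigenvalues and sums of complex numbers\<close>

lemma hermitian_eigenvalue_real:
  assumes "hermitian_mat A" "A \<in> carrier_mat n n" "v \<in> carrier_vec n" "v \<noteq> 0\<^sub>v n"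
    and "A *\<^sub>v v = \<mu> \<cdot>\<^sub>v v"
  shows "\<mu> \<in> \<real>"
proof -
  have Av: "(A *\<^sub>v v) $ j = (\<Sum>k<n. A $$ (j, k) * v $ k)" if "j < n" for j
    using assms(2,3) that by (simp add: scalar_prod_def atLeast0LessThan)
  have Av_eigen: "(A *\<^sub>v v) $ j = \<mu> * v $ j" if "j < n" for j
    using assms(3,5) that by (metis carrier_vecD index_smult_vec(1))
  have "dim_row A = n" using assms(2) by simp
  then have hermitian: "\<forall>j<n. \<forall>k<n. A $$ (k, j) = cnj (A $$ (j, k))"
    using assms(1) unfolding hermitian_mat_def by blast
  have herm: "cnj (A $$ (j, k)) = A $$ (k, j)" if "j < n" "k < n" for j k
  proof -
    have "A $$ (j, k) = cnj (A $$ (k, j))" using hermitian that by blast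
    then show ?thesis by simp
  qed
  define Q where "Q = (\<Sum>j<n. cnj (v $ j) * (A *\<^sub>v v) $ j)"
  define S where "S = (\<Sum>j<n. cnj (v $ j) * v $ j)"
  have "Q = \<mu> * S"
    unfolding Q_def S_def sum_distrib_left by (intro sum.cong refl) (simp add: Av_eigen mult.left_commute)
  moreover have "cnj Q = Q"
  proof -
    have "cnj Q = (\<Sum>j<n. \<Sum>k<n. cnj (v $ k) * (A $$ (k, j) * v $ j))"
      unfolding Q_def cnj_sum
      by (intro sum.cong refl) (simp add: Av herm sum_distrib_left mult.commute mult.left_commute)
    also have "\<dots> = Q"
      unfolding Q_def by (subst sum.swap) (intro sum.cong refl, simp add: Av sum_distrib_left)
    finally show ?thesis .
  qed
  moreover have "cnj S = S" by (simp add: S_def mult.commute)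
  moreover have "S \<noteq> 0"
  proof
    assume "S = 0"
    moreover have "S = of_real (\<Sum>j<n. (cmod (v $ j))\<^sup>2)"
      unfolding S_def of_real_sum complex_norm_square by (simp add: mult.commute)
    ultimately have "(\<Sum>j<n. (cmod (v $ j))\<^sup>2) = 0" by (metis of_real_eq_0_iff)
    then have "v $ j = 0" if "j < n" for j
      using that by (simp add: sum_nonneg_eq_0_iff)
    then show False using assms(3,4) by (auto intro: eq_vecI)
  qed
  ultimately have "cnj \<mu> = \<mu>" by (metis complex_cnj_mult mult_right_cancel)
  then show ?thesis by (simp add: Reals_cnj_iff)
qed

lemma unimodular_sum_norm_eq_imp_const:
  fixes u :: "nat \<Rightarrow> complex"
  assumes unit: "\<And>k. k < n \<Longrightarrow> norm (u k) = 1"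
    and sum: "norm (\<Sum>k<n. u k) = n" and "k < n"
  shows "u k = u 0"
proof -
  define T where "T = (\<Sum>k<n. u k)"
  have norm_T: "norm T = n" using sum by (simp add: T_def)
  have Re_le: "Re (u j * cnj T) \<le> n" if "j < n" for j
    using complex_Re_le_cmod[of "u j * cnj T"] unit[OF that] norm_T by (simp add: norm_mult)
  have "(\<Sum>j<n. Re (u j * cnj T)) = Re (T * cnj T)"
    by (simp add: T_def sum_distrib_right)
  also have "\<dots> = (\<Sum>j<n. real n)"
    using norm_T by (simp flip: complex_norm_square add: power2_eq_square)
  finally have "(\<Sum>j<n. real n - Re (u j * cnj T)) = 0"
    by (simp add: sum_subtractf)
  then have "\<forall>j\<in>{..<n}. real n - Re (u j * cnj T) = 0"
    by (rule sum_nonneg_eq_0_iff[THEN iffD1, rotated 2]) (use Re_le in auto)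
  then have Re_eq: "Re (u j * cnj T) = n" if "j < n" for j
    using that by simp
  have eq: "u j * cnj T = of_nat n" if "j < n" for j
  proof -
    define w where "w = u j * cnj T"
    have "cmod w = n" "Re w = n"
      using unit[OF that] norm_T Re_eq[OF that] by (simp_all add: w_def norm_mult)
    then have "Im w = 0" using cmod_power2[of w] by simp
    with \<open>Re w = n\<close> show ?thesis by (simp add: w_def[symmetric] complex_eq_iff)
  qed
  have "u k * cnj T = u 0 * cnj T" using eq[OF \<open>k < n\<close>] eq[of 0] \<open>k < n\<close> by simp
  moreover have "cnj T \<noteq> 0" using norm_T \<open>k < n\<close> by auto
  ultimately show ?thesis by simp
qed

lemma sum_scaled_differences_root_eq_0:
  fixes e :: "nat \<Rightarrow> 'a::field" and m :: "nat \<Rightarrow> int"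
  assumes "\<And>k. k < n \<Longrightarrow> c * (e k - e 0) = d * of_int (m k)" "d \<noteq> 0"
    and "(\<Sum>k<n. e k * z ^ k) = 0" "(\<Sum>k<n. z ^ k) = 0"
  shows "(\<Sum>k<n. of_int (m k) * z ^ k) = 0"
proof -
  have "d * (\<Sum>k<n. of_int (m k) * z ^ k) = (\<Sum>k<n. c * (e k - e 0) * z ^ k)"
    using assms(1) by (simp add: sum_distrib_left mult.assoc)
  also have "\<dots> = c * ((\<Sum>k<n. e k * z ^ k) - e 0 * (\<Sum>k<n. z ^ k))"
    by (simp add: sum_distrib_left sum_subtractf right_diff_distrib left_diff_distrib mult.assoc)
  finally show ?thesis using assms(2-4) by simp
qed

section \<open>Circulant matrices\<close>

lemma sum_lessThan_shift_periodic:
  fixes f :: "nat \<Rightarrow> 'a::ab_group_add"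
  assumes "\<And>i. f (i + n) = f i"
  shows "(\<Sum>i<n. f (i + s)) = (\<Sum>i<n. f i)"
proof (induction s)
  case (Suc s)
  have "(\<Sum>i<n. f (i + s)) + f s = (\<Sum>i<Suc n. f (i + s))"
    using assms[of s] by (simp add: add.commute)
  also have "\<dots> = f s + (\<Sum>i<n. f (i + Suc s))"
    by (subst sum.lessThan_Suc_shift) simp
  finally show ?case using Suc.IH by (simp add: add.commute)
qed simp

definition circ_eigenvalue :: "nat \<Rightarrow> (nat \<Rightarrow> complex) \<Rightarrow> nat \<Rightarrow> complex" where
  "circ_eigenvalue n a k = (\<Sum>m<n. a m * unity_root n ^ (m * k))"

lemma circ_mat_carrier [simp]: "circ_mat n a \<in> carrier_mat n n"
  by (simp add: circ_mat_def)

lemma circ_mat_mult_fourier_vec: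
  "circ_mat n a *\<^sub>v fourier_vec n k = circ_eigenvalue n a k \<cdot>\<^sub>v fourier_vec n k"
proof (rule eq_vecI)
  fix l assume "l < dim_vec (circ_eigenvalue n a k \<cdot>\<^sub>v fourier_vec n k)"
  then have l: "l < n" by (simp add: fourier_vec_def)
  define h where "h i = a ((i + n - l) mod n) * unity_root n ^ (i * k)" for i
  have "h (i + n) = h i" for i
  proof -
    have "i + n + n - l = (i + n - l) + n" using l by simp
    then have "(i + n + n - l) mod n = (i + n - l) mod n" by simp
    moreover have "unity_root n ^ ((i + n) * k) = unity_root n ^ (i * k)"
      using l by (simp add: add_mult_distrib power_add power_mult unity_root_power_self)
    ultimately show ?thesis by (simp add: h_def)
  qed
  then have "(\<Sum>i<n. h i) = (\<Sum>m<n. h (m + l))" by (rule sum_lessThan_shift_periodic[symmetric])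
  also have "\<dots> = (\<Sum>m<n. a m * unity_root n ^ (m * k)) * unity_root n ^ (l * k)"
    unfolding sum_distrib_right using l
    by (intro sum.cong) (auto simp: h_def add_mult_distrib power_add)
  finally have "(\<Sum>i<n. h i) = circ_eigenvalue n a k * unity_root n ^ (l * k)"
    by (simp add: circ_eigenvalue_def)
  then show "(circ_mat n a *\<^sub>v fourier_vec n k) $ l = (circ_eigenvalue n a k \<cdot>\<^sub>v fourier_vec n k) $ l"
    using l by (simp add: circ_mat_def fourier_vec_def scalar_prod_def h_def atLeast0LessThan)
qed (simp add: circ_mat_def fourier_vec_def)

lemma circ_eigenvalue_real:
  assumes "hermitian_mat (circ_mat n a)" "n > 0"
  shows "circ_eigenvalue n a k \<in> \<real>"
  using assms(1) circ_mat_carrier fourier_vec_carrier fourier_vec_nonzero[OF assms(2)]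
    circ_mat_mult_fourier_vec
  by (rule hermitian_eigenvalue_real)

lemma circ_eigenvalue_inversion:
  assumes "0 < j" "j < n"
  shows "(\<Sum>k<n. circ_eigenvalue n a k * (unity_root n ^ (n - j)) ^ k) = of_nat n * a j"
proof -
  have "of_nat n * circ_mat n a $$ (n - j, 0) = (\<Sum>k<n. circ_eigenvalue n a k * unity_root n ^ ((n - j) * k))"
    using assms by (intro fourier_column circ_mat_carrier circ_mat_mult_fourier_vec) auto
  moreover have "circ_mat n a $$ (n - j, 0) = a j"
    using assms by (simp add: circ_mat_def)
  ultimately show ?thesis by (simp add: power_mult)
qed

lemma circ_pst_phases_equal:
  assumes herm: "hermitian_mat (circ_mat n a)" and n: "1 < n"
    and pst: "cmod (mat_exp ((- \<i> * of_real t) \<cdot>\<^sub>m circ_mat n a) $$ (1, 0)) = 1"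
    and "k < n"
  shows "cis (2 * pi * k / n - t * Re (circ_eigenvalue n a k)) = cis (- t * Re (circ_eigenvalue n a 0))"
proof -
  define u where "u k = cis (2 * pi * k / n - t * Re (circ_eigenvalue n a k))" for k
  have "exp (- \<i> * of_real t * circ_eigenvalue n a k) * unity_root n ^ (1 * k) = u k" for k
  proof -
    define r where "r = Re (circ_eigenvalue n a k)"
    have "circ_eigenvalue n a k = of_real r"
      using circ_eigenvalue_real[OF herm] n by (simp add: r_def)
    then have "exp (- \<i> * of_real t * circ_eigenvalue n a k) = cis (- t * r)"
      by (simp add: cis_conv_exp mult.assoc)
    then show ?thesis by (simp add: u_def r_def unity_root_power cis_mult)
  qed
  moreover have "mat_exp ((- \<i> * of_real t) \<cdot>\<^sub>m circ_mat n a) $$ (1, 0)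
      = (\<Sum>k<n. exp (- \<i> * of_real t * circ_eigenvalue n a k) * unity_root n ^ (1 * k)) / of_nat n"
    using n by (intro mat_exp_column)
      (simp_all add: smult_mat_mult_mat_vec[OF circ_mat_carrier fourier_vec_carrier]
        circ_mat_mult_fourier_vec smult_smult_assoc)
  ultimately have "norm (\<Sum>k<n. u k) = n" using pst n by (simp add: norm_divide)
  then have "u k = u 0" using \<open>k < n\<close> by (intro unimodular_sum_norm_eq_imp_const) (simp_all add: u_def)
  then show ?thesis by (simp add: u_def)
qed

lemma circ_pst_eigenvalue_gaps:
  assumes herm: "hermitian_mat (circ_mat n a)" and n: "1 < n"
    and pst: "cmod (mat_exp ((- \<i> * of_real t) \<cdot>\<^sub>m circ_mat n a) $$ (1, 0)) = 1"
  shows "\<exists>m::nat \<Rightarrow> int. \<forall>k<n.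
    of_real t * (circ_eigenvalue n a k - circ_eigenvalue n a 0) = of_real (2 * pi / n) * of_int (m k)
    \<and> [m k = int k] (mod int n)"
proof -
  have "\<exists>m::int. of_real t * (circ_eigenvalue n a k - circ_eigenvalue n a 0) = of_real (2 * pi / n) * of_int m
    \<and> [m = int k] (mod int n)" if "k < n" for k
  proof -
    define r where "r i = Re (circ_eigenvalue n a i)" for i
    define x where "x = 2 * pi * k / n - t * r k"
    have "cis x = cis (- t * r 0)"
      unfolding x_def r_def by (rule circ_pst_phases_equal[OF herm n pst that])
    moreover have "cis (x - (- t * r 0)) = cis x / cis (- t * r 0)" by (rule cis_divide[symmetric])
    ultimately have "cis (x - (- t * r 0)) = 1" by simp
    then obtain N :: int where N: "x + t * r 0 = of_int N * (2 * pi)"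
      by (auto simp: cis_eq_1_iff)
    have gap: "t * (r k - r 0) = 2 * pi / n * of_int (int k - int n * N)"
      using N n by (simp add: x_def field_simps)
    have real: "circ_eigenvalue n a i = of_real (r i)" for i
      using circ_eigenvalue_real[OF herm] n by (simp add: r_def)
    have "of_real t * (circ_eigenvalue n a k - circ_eigenvalue n a 0) = of_real (t * (r k - r 0))"
      by (simp add: real)
    also have "\<dots> = of_real (2 * pi / n) * of_int (int k - int n * N)"
      unfolding gap by simp
    finally have "of_real t * (circ_eigenvalue n a k - circ_eigenvalue n a 0)
      = of_real (2 * pi / n) * of_int (int k - int n * N)" .
    moreover have "[int k - int n * N = int k] (mod int n)"
      by (simp add: cong_iff_dvd_diff)
    ultimately show ?thesis by blast
  qed
  then have "\<forall>k\<in>{..<n}. \<exists>m::int. of_real t * (circ_eigenvalue n a k - circ_eigenvalue n a 0)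
      = of_real (2 * pi / n) * of_int m \<and> [m = int k] (mod int n)"
    by blast
  then show ?thesis by (auto dest!: bchoice)
qed

theorem lemma4:
  fixes p :: nat and a :: "nat \<Rightarrow> complex"
  assumes "prime p"
    and "hermitian_mat (circ_mat p a)"
    and "universal_pst (circ_mat p a)"
  shows "\<forall>j \<in> {1..p-1}. a j \<noteq> 0"
proof (intro ballI notI)
  fix j assume "j \<in> {1..p-1}" and "a j = 0"
  have p: "1 < p" using assms(1) by (rule prime_gt_1_nat)
  with \<open>j \<in> {1..p-1}\<close> have j: "0 < j" "j < p" by auto
  from assms(3) p obtain t where "cmod (mat_exp ((- \<i> * of_real t) \<cdot>\<^sub>m circ_mat p a) $$ (1, 0)) = 1"
    unfolding universal_pst_def by (force simp: circ_mat_def)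
  from circ_pst_eigenvalue_gaps[OF assms(2) p this] obtain m :: "nat \<Rightarrow> int" where
    gap: "\<And>k. k < p \<Longrightarrow> of_real t * (circ_eigenvalue p a k - circ_eigenvalue p a 0)
      = of_real (2 * pi / p) * of_int (m k)"
    and m_cong: "\<And>k. k < p \<Longrightarrow> [m k = int k] (mod int p)"
    by blast
  define z where "z = unity_root p ^ (p - j)"
  have "\<not> p dvd p - j" using j by (auto dest: dvd_imp_le)
  then have "z ^ p = 1" "z \<noteq> 1" and sum_z: "(\<Sum>k<p. z ^ k) = 0"
    using p sum_unity_root_powers[of p "p - j"]
    by (simp_all add: z_def unity_root_power_eq_1_iff flip: power_mult)
  have sum_eigenvalues: "(\<Sum>k<p. circ_eigenvalue p a k * z ^ k) = 0"
    using circ_eigenvalue_inversion[OF j] \<open>a j = 0\<close> by (simp add: z_def)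
  have "(\<Sum>k<p. of_int (m k) * z ^ k) = 0"
    using p by (intro sum_scaled_differences_root_eq_0[OF gap _ sum_eigenvalues sum_z]) auto
  then have "m 1 = m 0"
    using int_relation_prime_root_of_unity_const[OF assms(1) \<open>z ^ p = 1\<close> \<open>z \<noteq> 1\<close>] p by blast
  with m_cong[of 1] m_cong[of 0] p have "[1 = 0] (mod int p)"
    by (simp add: cong_def)
  with p show False by (simp add: cong_iff_dvd_diff)
qed

end
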